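(* Let $\zeta\in M_1^{n-1}$ and let $I:\mathrm{Conv}_{\mathrm{coe}}^{(n)}(\mathbb{R}^n)\to\mathrm{Conv}_{\mathrm{coe}}^{(n)}(\mathbb{R}^n)$ satisfy $\delta_{\zeta,1}(I(u),I(v))=\delta_{\zeta,1}(u,v)$ for all $u,v$. Let $\phi\in GL(n)$ and $x_0\in\mathbb{R}^n$ be such that $\mathrm{dom}\,I(\mathrm{I}^\infty_K+t)=\phi K+x_0$ for every convex body $K$ with non-empty interior and every $t\in\mathbb{R}$. Then $f(t)=\zeta^{-1}(\zeta(t)/|\det\phi|)$ is well-defined for every $t\in\mathbb{R}$, and $I(\mathrm{I}^\infty_K+t)=\mathrm{I}^\infty_{\phi K+x_0}+f(t)$ for every convex body $K$ with non-empty interior and every $t\in\mathbb{R}$.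
   Context: $\mathrm{Conv}_{\mathrm{coe}}^{(n)}(\mathbb{R}^n)$ is the set of proper, lower semicontinuous, convex, coercive $u:\mathbb{R}^n\to\mathbb{R}\cup\{+\infty\}$ with $n$-dimensional domain. $M_1^{n-1}$ is the set of continuous, strictly decreasing $\zeta:\mathbb{R}\to(0,\infty)$ with $\int_0^\infty\zeta(t)t^{n-1}dt<\infty$. $\delta_{\zeta,1}(u,v)=\int_{\mathbb{R}^n}|\zeta(u(x))-\zeta(v(x))|dx$, with $\zeta(+\infty):=0$. $\mathrm{I}^\infty_K$ is $0$ on $K$ and $+\infty$ outside. *)

theory Defs
  imports "HOL-Analysis.Analysis"
begin

(* Functions R^n -> R \<union> {+\<infinity>} are modelled as ereal-valued functions that never take -\<infinity>. *)

definition edom :: "('a \<Rightarrow> ereal) \<Rightarrow> 'a set" where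
  "edom u = {x. u x < \<infinity>}"

definition econvex :: "('a::real_vector \<Rightarrow> ereal) \<Rightarrow> bool" where
  "econvex u \<longleftrightarrow> (\<forall>x y t. 0 \<le> t \<and> t \<le> 1 \<longrightarrow>
      u ((1 - t) *\<^sub>R x + t *\<^sub>R y) \<le> ereal (1 - t) * u x + ereal t * u y)"

definition elsc :: "('a::topological_space \<Rightarrow> ereal) \<Rightarrow> bool" where
  "elsc u \<longleftrightarrow> (\<forall>c. closed {x. u x \<le> c})"

definition Conv_coe :: "(real^'n \<Rightarrow> ereal) set" where
  "Conv_coe = {u. (\<forall>x. u x \<noteq> -\<infinity>) \<and> edom u \<noteq> {} \<and> elsc u \<and> econvex u
       \<and> (u \<longlongrightarrow> \<infinity>) at_infinity \<and> aff_dim (edom u) = int CARD('n)}"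

definition M1 :: "nat \<Rightarrow> (real \<Rightarrow> real) set" where
  "M1 n = {\<zeta>. continuous_on UNIV \<zeta> \<and> (\<forall>s t. s < t \<longrightarrow> \<zeta> t < \<zeta> s) \<and> (\<forall>t. \<zeta> t > 0)
       \<and> set_integrable lborel {0..} (\<lambda>t. \<zeta> t * t ^ n)}"

definition zeta_ext :: "(real \<Rightarrow> real) \<Rightarrow> ereal \<Rightarrow> real" where
  "zeta_ext \<zeta> v = (case v of ereal r \<Rightarrow> \<zeta> r | _ \<Rightarrow> 0)"

definition delta_zeta1 :: "(real \<Rightarrow> real) \<Rightarrow> (real^'n \<Rightarrow> ereal) \<Rightarrow> (real^'n \<Rightarrow> ereal) \<Rightarrow> ennreal" where
  "delta_zeta1 \<zeta> u v = (\<integral>\<^sup>+ x. ennreal \<bar>zeta_ext \<zeta> (u x) - zeta_ext \<zeta> (v x)\<bar> \<partial>lborel)"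

definition ind_inf :: "'a set \<Rightarrow> 'a \<Rightarrow> ereal" where
  "ind_inf K x = (if x \<in> K then 0 else \<infinity>)"

end

theory Submission
  imports Defs
begin

(* Fix a convex body K and t \<in> \<real>, and let u = I(I\<^sup>\<infinity>\<^sub>K + t), D = \<phi>K + x0 = dom u and
   c = \<zeta>(t) / |det \<phi>|. Since delta_zeta1 of two functions with disjoint domains is the sum of
   their \<zeta>-integrals, comparing I\<^sup>\<infinity>\<^sub>K + t with indicators of bodies disjoint from K gives
   \<integral> \<zeta>\<circ>u = \<zeta>(t) |K| = c |D|, and comparing it with I\<^sup>\<infinity>\<^sub>L + t for small balls L \<subseteq> K shows
   that \<zeta>\<circ>u has mean at least c on every \<phi>L + x0. Lower semicontinuity of u together with
   continuity and monotonicity of \<zeta> turns this into \<zeta>\<circ>u \<ge> c on the interior of D, so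
   \<zeta>\<circ>u = c almost everywhere on D and c is a value of \<zeta>. Convexity and lower semicontinuity
   of u finally make u equal to \<zeta>\<^sup>-\<^sup>1(c) everywhere on D. *)

section \<open>Volume of linear images\<close>

lemma sign_conj_bij:
  fixes \<sigma> :: "'m \<Rightarrow> 'n::finite"
  assumes "bij \<sigma>" "p permutes UNIV"
  shows "sign (inv \<sigma> \<circ> p \<circ> \<sigma>) = sign p"
proof -
  have "map_permutation UNIV (inv \<sigma>) p = inv \<sigma> \<circ> p \<circ> \<sigma>"
    using assms(1) by (simp add: map_permutation_def restrict_id_def inv_inv_eq bij_is_surj
        bij_imp_bij_inv bij_is_inj surj_imp_inv_eq fun_eq_iff)
  then show ?thesis
    using sign_map_permutation[OF _ assms(2), of "inv \<sigma>"] assms(1)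
    by (simp add: bij_imp_bij_inv bij_is_inj)
qed

lemma bij_betw_conj_permutes:
  fixes \<sigma> :: "'m \<Rightarrow> 'n"
  assumes "bij \<sigma>"
  shows "bij_betw (\<lambda>p. inv \<sigma> \<circ> p \<circ> \<sigma>) {p. p permutes (UNIV :: 'n set)} {q. q permutes (UNIV :: 'm set)}"
proof (rule bij_betw_byWitness[where f' = "\<lambda>q. \<sigma> \<circ> q \<circ> inv \<sigma>"])
  have inv_\<sigma>: "inv \<sigma> (\<sigma> x) = x" "\<sigma> (inv \<sigma> y) = y" for x y
    using assms by (simp_all add: bij_is_inj bij_is_surj surj_f_inv_f)
  then show "\<forall>p\<in>{p. p permutes UNIV}. \<sigma> \<circ> (inv \<sigma> \<circ> p \<circ> \<sigma>) \<circ> inv \<sigma> = p"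
    "\<forall>q\<in>{q. q permutes UNIV}. inv \<sigma> \<circ> (\<sigma> \<circ> q \<circ> inv \<sigma>) \<circ> \<sigma> = q"
    by (auto simp: fun_eq_iff)
  show "(\<lambda>p. inv \<sigma> \<circ> p \<circ> \<sigma>) ` {p. p permutes UNIV} \<subseteq> {q. q permutes UNIV}"
    "(\<lambda>q. \<sigma> \<circ> q \<circ> inv \<sigma>) ` {q. q permutes UNIV} \<subseteq> {p. p permutes UNIV}"
    using assms by (auto intro!: bij_imp_permutes bij_comp bij_imp_bij_inv dest: permutes_bij)
qed

lemma det_reindex:
  fixes A :: "'a::comm_ring_1^'n^'n" and \<sigma> :: "'m::finite \<Rightarrow> 'n::finite"
  assumes "bij \<sigma>"
  shows "det (\<chi> i j. A $ \<sigma> i $ \<sigma> j) = det A"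
proof -
  have "det (\<chi> i j. A $ \<sigma> i $ \<sigma> j) = (\<Sum>p | p permutes UNIV.
      of_int (sign (inv \<sigma> \<circ> p \<circ> \<sigma>)) * (\<Prod>i\<in>UNIV. A $ \<sigma> i $ \<sigma> ((inv \<sigma> \<circ> p \<circ> \<sigma>) i)))"
    unfolding det_def using bij_betw_conj_permutes[OF assms]
    by (simp add: sum.reindex_bij_betw[symmetric])
  also have "\<dots> = (\<Sum>p | p permutes UNIV. of_int (sign p) * (\<Prod>i\<in>UNIV. A $ i $ p i))"
  proof (intro sum.cong refl, clarify)
    fix p assume "p permutes (UNIV :: 'n set)"
    moreover have "(\<Prod>i\<in>UNIV. A $ \<sigma> i $ p (\<sigma> i)) = (\<Prod>i\<in>UNIV. A $ i $ p i)"
      using prod.reindex[OF bij_is_inj[OF assms], of "\<lambda>i. A $ i $ p i"] assms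
      by (simp add: bij_is_surj)
    ultimately show "of_int (sign (inv \<sigma> \<circ> p \<circ> \<sigma>)) * (\<Prod>i\<in>UNIV. A $ \<sigma> i $ \<sigma> ((inv \<sigma> \<circ> p \<circ> \<sigma>) i))
        = of_int (sign p) * (\<Prod>i\<in>UNIV. A $ i $ p i)"
      using assms by (simp add: sign_conj_bij bij_is_surj surj_f_inv_f)
  qed
  finally show ?thesis
    unfolding det_def .
qed

definition reindex :: "('m \<Rightarrow> 'n) \<Rightarrow> 'a^'n \<Rightarrow> 'a^'m" where
  "reindex \<sigma> x = (\<chi> i. x $ \<sigma> i)"

lemma reindex_nth [simp]: "reindex \<sigma> x $ i = x $ \<sigma> i"
  by (simp add: reindex_def)

lemma reindex_inv:
  assumes "bij \<sigma>"
  shows "reindex \<sigma> (reindex (inv \<sigma>) y) = y" "reindex (inv \<sigma>) (reindex \<sigma> x) = x"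
  using assms by (simp_all add: reindex_def vec_eq_iff bij_is_inj bij_is_surj surj_f_inv_f)

lemma linear_reindex: "linear (reindex \<sigma> :: real^'n \<Rightarrow> real^'m)"
  by (auto simp: linear_iff vec_eq_iff reindex_def)

lemma borel_measurable_reindex: "(reindex \<sigma> :: real^'n \<Rightarrow> real^'m) \<in> borel_measurable borel"
  unfolding reindex_def[abs_def] by (intro borel_measurable_continuous_onI continuous_intros)

lemma reindex_image:
  assumes "bij \<sigma>"
  shows "reindex \<sigma> ` X = reindex (inv \<sigma>) -` X"
proof (intro set_eqI iffI)
  show "y \<in> reindex \<sigma> ` X" if "y \<in> reindex (inv \<sigma>) -` X" for y
    using that by (intro image_eqI[of y _ "reindex (inv \<sigma>) y"]) (simp_all add: reindex_inv[OF assms])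
qed (auto simp: reindex_inv[OF assms])

lemma lborel_distr_reindex:
  fixes \<sigma> :: "'m::finite \<Rightarrow> 'n::finite"
  assumes "bij \<sigma>"
  shows "distr lborel borel (reindex \<sigma> :: real^'n \<Rightarrow> real^'m) = lborel"
proof (rule sym, rule lborel_eqI)
  have inv_\<sigma>: "inv \<sigma> (\<sigma> x) = x" "\<sigma> (inv \<sigma> y) = y" for x y
    using assms by (simp_all add: bij_is_inj bij_is_surj surj_f_inv_f)
  fix l u :: "real^'m"
  assume le: "\<And>b. b \<in> Basis \<Longrightarrow> l \<bullet> b \<le> u \<bullet> b"
  have lu: "l $ i \<le> u $ i" for i
    using le[of "axis i 1"] by (simp add: inner_axis)
  have "reindex \<sigma> -` box l u = box (reindex (inv \<sigma>) l) (reindex (inv \<sigma>) u)"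
  proof (intro set_eqI)
    fix x :: "real^'n"
    have "(\<forall>j. l $ inv \<sigma> j < x $ j \<and> x $ j < u $ inv \<sigma> j)
        \<longleftrightarrow> (\<forall>i. l $ inv \<sigma> (\<sigma> i) < x $ \<sigma> i \<and> x $ \<sigma> i < u $ inv \<sigma> (\<sigma> i))"
      by (metis inv_\<sigma>(2))
    then show "x \<in> reindex \<sigma> -` box l u \<longleftrightarrow> x \<in> box (reindex (inv \<sigma>) l) (reindex (inv \<sigma>) u)"
      by (simp add: mem_box_cart reindex_def inv_\<sigma>(1))
  qed
  then have "emeasure (distr lborel borel (reindex \<sigma>)) (box l u)
      = emeasure lborel (box (reindex (inv \<sigma>) l) (reindex (inv \<sigma>) u))"
    by (simp add: emeasure_distr borel_measurable_reindex)
  also have "\<dots> = (\<Prod>j\<in>UNIV. u $ inv \<sigma> j - l $ inv \<sigma> j)"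
    using lu by (simp add: emeasure_lborel_box_eq Basis_vec_def axis_eq_axis prod.UNION_disjoint inner_axis)
  also have "\<dots> = (\<Prod>i\<in>UNIV. u $ i - l $ i)"
    using prod.reindex[OF bij_is_inj[OF assms], of "\<lambda>j. u $ inv \<sigma> j - l $ inv \<sigma> j"] assms
    by (simp add: bij_is_surj inv_\<sigma>)
  also have "\<dots> = (\<Prod>b\<in>Basis. (u - l) \<bullet> b)"
    by (simp add: Basis_vec_def axis_eq_axis prod.UNION_disjoint inner_axis)
  finally show "emeasure (distr lborel borel (reindex \<sigma>)) (box l u) = (\<Prod>b\<in>Basis. (u - l) \<bullet> b)" .
qed simp

lemma emeasure_lborel_reindex_image:
  fixes \<sigma> :: "'m::finite \<Rightarrow> 'n::finite"
  assumes "bij \<sigma>" "X \<in> sets borel"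
  shows "emeasure lborel (reindex \<sigma> ` X :: (real^'m) set) = emeasure lborel X"
proof -
  have "emeasure lborel (reindex \<sigma> ` X :: (real^'m) set) = emeasure lborel (reindex (inv \<sigma>) -` X)"
    by (simp add: reindex_image[OF assms(1)])
  also have "\<dots> = emeasure (distr lborel borel (reindex (inv \<sigma>))) X"
    using assms(2) by (simp add: emeasure_distr borel_measurable_reindex)
  also have "\<dots> = emeasure lborel X"
    using lborel_distr_reindex[OF bij_imp_bij_inv[OF assms(1)]] by simp
  finally show ?thesis .
qed

lemma matrix_reindex_conj:
  assumes "bij \<sigma>"
  shows "matrix (reindex \<sigma> \<circ> f \<circ> reindex (inv \<sigma>)) = (\<chi> i j. matrix f $ \<sigma> i $ \<sigma> j)"
proof -
  have "inv \<sigma> k = j \<longleftrightarrow> k = \<sigma> j" for k j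
    using assms by (auto simp: bij_is_inj bij_is_surj surj_f_inv_f)
  then have axis: "reindex (inv \<sigma>) (axis j 1) = axis (\<sigma> j) 1" for j
    by (simp add: vec_eq_iff axis_def)
  show ?thesis
    by (simp add: matrix_def axis)
qed

(* The library proves the volume formula for linear maps (measure_linear_image) only for
   well-ordered index types; it is transported to an arbitrary finite index type 'n along the
   relabelling of coordinates by a well-ordered copy of 'n. *)

typedef 'a ranked = "UNIV :: 'a set" by simp

instance ranked :: (finite) finite
proof
  show "finite (UNIV :: 'a ranked set)"
    using finite_imageI[of "UNIV :: 'a set" Abs_ranked]
    by (simp add: type_definition.Abs_image[OF type_definition_ranked])
qed

instantiation ranked :: (finite) wellorder
begin

definition less_eq_ranked :: "'a ranked \<Rightarrow> 'a ranked \<Rightarrow> bool"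
  where "x \<le> y \<longleftrightarrow> to_nat (Rep_ranked x) \<le> to_nat (Rep_ranked y)"

definition less_ranked :: "'a ranked \<Rightarrow> 'a ranked \<Rightarrow> bool"
  where "x < y \<longleftrightarrow> to_nat (Rep_ranked x) < to_nat (Rep_ranked y)"

instance
proof
  fix x y z :: "'a ranked"
  show "x < y \<longleftrightarrow> x \<le> y \<and> \<not> y \<le> x" "x \<le> x" "x \<le> y \<or> y \<le> x"
    by (auto simp: less_eq_ranked_def less_ranked_def)
  show "x \<le> y \<Longrightarrow> y \<le> z \<Longrightarrow> x \<le> z"
    by (simp add: less_eq_ranked_def)
  show "x = y" if "x \<le> y" "y \<le> x"
  proof -
    have "to_nat (Rep_ranked x) = to_nat (Rep_ranked y)"
      using that by (simp add: less_eq_ranked_def)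
    then show "x = y"
      by (metis Rep_ranked_inject inj_to_nat injD)
  qed
next
  fix P :: "'a ranked \<Rightarrow> bool" and a
  assume step: "\<And>x. (\<And>y. y < x \<Longrightarrow> P y) \<Longrightarrow> P x"
  show "P a"
  proof (induction a rule: measure_induct_rule[where f = "\<lambda>x. to_nat (Rep_ranked x)"])
    case (less x)
    show ?case
      by (rule step, rule less.IH) (simp add: less_ranked_def)
  qed
qed

end

lemma bij_Rep_ranked: "bij Rep_ranked"
  by (rule bij_betw_byWitness[where f' = Abs_ranked]) (simp_all add: Rep_ranked_inverse Abs_ranked_inverse)

lemma emeasure_lborel_compact_eq_measure:
  assumes "compact X"
  shows "emeasure lborel X = ennreal (measure lebesgue X)"
proof -
  have "X \<in> sets lborel"
    using borel_compact[OF assms] by simp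
  then have "emeasure lborel X = emeasure lebesgue X"
    by (simp add: emeasure_completion)
  also have "\<dots> = ennreal (measure lebesgue X)"
    using lmeasurable_compact[OF assms] by (simp add: emeasure_eq_measure2)
  finally show ?thesis .
qed

lemma emeasure_lborel_linear_image:
  fixes f :: "real^'n \<Rightarrow> real^'n"
  assumes "linear f" "compact S"
  shows "emeasure lborel (f ` S) = ennreal \<bar>det (matrix f)\<bar> * emeasure lborel S"
proof -
  let ?R = "reindex Rep_ranked :: real^'n \<Rightarrow> real^'n ranked"
  let ?R' = "reindex (inv Rep_ranked) :: real^'n ranked \<Rightarrow> real^'n"
  define g where "g = ?R \<circ> f \<circ> ?R'"
  have "linear g"
    unfolding g_def by (intro linear_compose linear_reindex assms(1))
  have cpt: "compact (?R ` S)" "compact (g ` ?R ` S)"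
    using linear_reindex \<open>linear g\<close> assms(2) unfolding linear_conv_bounded_linear
    by (metis compact_continuous_image linear_continuous_on)+
  have "f ` S = ?R' ` g ` ?R ` S"
    by (simp add: g_def image_comp o_def reindex_inv[OF bij_Rep_ranked])
  then have "emeasure lborel (f ` S) = emeasure lborel (g ` ?R ` S)"
    using emeasure_lborel_reindex_image[OF bij_imp_bij_inv[OF bij_Rep_ranked] borel_compact[OF cpt(2)]]
    by simp
  also have "\<dots> = ennreal (\<bar>det (matrix g)\<bar> * measure lebesgue (?R ` S))"
    using measure_linear_image[OF \<open>linear g\<close> lmeasurable_compact[OF cpt(1)]]
      emeasure_lborel_compact_eq_measure[OF cpt(2)] by simp
  also have "det (matrix g) = det (matrix f)"
    unfolding g_def matrix_reindex_conj[OF bij_Rep_ranked] by (rule det_reindex[OF bij_Rep_ranked])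
  also have "ennreal (\<bar>det (matrix f)\<bar> * measure lebesgue (?R ` S))
      = ennreal \<bar>det (matrix f)\<bar> * emeasure lborel S"
    by (simp add: ennreal_mult emeasure_lborel_compact_eq_measure[OF cpt(1), symmetric]
        emeasure_lborel_reindex_image[OF bij_Rep_ranked borel_compact[OF assms(2)]])
  finally show ?thesis .
qed

lemma affine_image_eq:
  "(\<lambda>x. A *v x + b) ` S = (+) b ` ((*v) A ` S)"
  by (auto simp: image_image add.commute)

lemma compact_affine_image:
  fixes A :: "real^'n^'m"
  shows "compact S \<Longrightarrow> compact ((\<lambda>x. A *v x + b) ` S)"
  unfolding affine_image_eq
  by (intro compact_translation compact_continuous_image matrix_vector_mult_linear_continuous_on)

lemma emeasure_lborel_affine_image:
  fixes A :: "real^'n^'n"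
  assumes "compact S"
  shows "emeasure lborel ((\<lambda>x. A *v x + b) ` S) = ennreal \<bar>det A\<bar> * emeasure lborel S"
proof -
  have cpt: "compact ((*v) A ` S)"
    using compact_affine_image[OF assms, of A 0] by simp
  have "emeasure lborel ((\<lambda>x. A *v x + b) ` S) = ennreal (measure lebesgue ((*v) A ` S))"
    unfolding affine_image_eq
    by (simp add: emeasure_lborel_compact_eq_measure compact_translation[OF cpt] measure_translation)
  also have "\<dots> = emeasure lborel ((*v) A ` S)"
    by (simp add: emeasure_lborel_compact_eq_measure[OF cpt])
  also have "\<dots> = ennreal \<bar>det A\<bar> * emeasure lborel S"
    using emeasure_lborel_linear_image[OF matrix_vector_mul_linear assms] by simp
  finally show ?thesis .
qed

lemma emeasure_lborel_pos_open:
  fixes S :: "'a::euclidean_space set"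
  assumes "open S" "S \<noteq> {}"
  shows "0 < emeasure lborel S"
proof -
  obtain x r where r: "0 < r" "ball x r \<subseteq> S"
    using assms open_contains_ball by blast
  have "0 < emeasure lborel (ball x r)"
    using r by (simp add: emeasure_ball)
  also have "\<dots> \<le> emeasure lborel S"
    using r assms by (intro emeasure_mono) auto
  finally show ?thesis .
qed

lemma AE_lborel_open_ex:
  fixes S :: "'a::euclidean_space set"
  assumes "AE x in lborel. x \<in> S \<longrightarrow> P x" "open S" "S \<noteq> {}"
  shows "\<exists>x\<in>S. P x"
proof (rule ccontr)
  assume "\<not> (\<exists>x\<in>S. P x)"
  with assms(1) have "AE x in lborel. x \<notin> S"
    by (auto elim: AE_mp)
  then have "emeasure lborel S = 0"
    using assms(2) AE_iff_null_sets[of S lborel] by auto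
  with emeasure_lborel_pos_open[OF assms(2,3)] show False
    by simp
qed

lemma emeasure_lborel_interior_convex:
  fixes D :: "'a::euclidean_space set"
  assumes "convex D" "closed D"
  shows "emeasure lborel (interior D) = emeasure lborel D"
proof -
  have "negligible (D - interior D)"
    using negligible_convex_frontier[OF assms(1)] assms(2) by (simp add: frontier_def)
  then have "emeasure lborel (D - interior D) = 0"
    using assms(2) by (simp add: negligible_iff_emeasure0 emeasure_completion borel_closed)
  then show ?thesis
    using plus_emeasure[of "interior D" lborel "D - interior D"] assms(2) interior_subset[of D]
    by (simp add: borel_closed Un_absorb1)
qed

lemma AE_le_if_ge_and_nn_integral_le:
  fixes g :: "'a \<Rightarrow> real"
  assumes g: "g \<in> borel_measurable M" and S: "S \<in> sets M" "emeasure M S < \<infinity>"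
    and ge: "\<And>x. x \<in> S \<Longrightarrow> c \<le> g x" and "0 \<le> c"
    and le: "(\<integral>\<^sup>+x. ennreal (g x) * indicator S x \<partial>M) \<le> ennreal c * emeasure M S"
  shows "AE x in M. x \<in> S \<longrightarrow> g x \<le> c"
proof -
  define d where "d x = ennreal (g x - c) * indicator S x" for x
  have d_meas: "d \<in> borel_measurable M"
    unfolding d_def using g S by measurable
  have g_split: "ennreal (g x) * indicator S x = ennreal c * indicator S x + d x" for x
    using ge[of x] \<open>0 \<le> c\<close> by (auto simp: d_def ennreal_plus[symmetric] split: split_indicator)
  have "ennreal c * emeasure M S + integral\<^sup>N M d = (\<integral>\<^sup>+x. ennreal (g x) * indicator S x \<partial>M)"
    unfolding g_split using d_meas S by (simp add: nn_integral_add nn_integral_cmult_indicator)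
  with le have "ennreal c * emeasure M S + integral\<^sup>N M d \<le> ennreal c * emeasure M S + 0"
    by simp
  moreover have "ennreal c * emeasure M S < \<infinity>"
    using S(2) by (simp add: ennreal_mult_less_top)
  ultimately have "integral\<^sup>N M d = 0"
    by (subst (asm) ennreal_add_left_cancel_le) auto
  then have "AE x in M. d x = 0"
    using nn_integral_0_iff_AE[OF d_meas] by simp
  then show ?thesis
    by (rule AE_mp) (auto simp: d_def ennreal_eq_0_iff split: split_indicator)
qed

lemma ennreal_add_le_abs_diff:
  fixes a b :: real
  assumes "0 \<le> a" "0 \<le> b"
  shows "ennreal a + ennreal b \<le> ennreal \<bar>a - b\<bar> + 2 * ennreal a"
proof -
  have "ennreal a + ennreal b = ennreal (a + b)"
    using assms by (simp add: ennreal_plus)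
  also have "\<dots> \<le> ennreal (\<bar>a - b\<bar> + 2 * a)"
    using abs_ge_minus_self[of "a - b"] by (intro ennreal_leI) linarith
  also have "\<dots> = ennreal \<bar>a - b\<bar> + 2 * ennreal a"
    using assms by (simp add: ennreal_plus ennreal_mult)
  finally show ?thesis .
qed

lemma ennreal_eq_if_pairwise_sums_eq:
  fixes a b c x y z :: ennreal
  assumes "a + b = x + y" "a + c = x + z" "b + c = y + z" "x < top" "y < top" "z < top"
  shows "a = x"
proof -
  have fin: "a < top" "b < top" "c < top"
    using assms(1,2,4-6) ennreal_add_less_top[of a b] ennreal_add_less_top[of a c]
      ennreal_add_less_top[of x y] ennreal_add_less_top[of x z]
    by simp_all
  have "enn2real a + enn2real b = enn2real x + enn2real y"
       "enn2real a + enn2real c = enn2real x + enn2real z"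
       "enn2real b + enn2real c = enn2real y + enn2real z"
    using assms fin by (simp_all flip: enn2real_plus)
  then have "enn2real a = enn2real x"
    by linarith
  then have "ennreal (enn2real a) = ennreal (enn2real x)"
    by (rule arg_cong)
  then show ?thesis
    by (simp only: ennreal_enn2real[OF fin(1)] ennreal_enn2real[OF assms(4)])
qed

section \<open>Convex bodies and their indicator functions\<close>

definition convex_body :: "'a::euclidean_space set \<Rightarrow> bool" where
  "convex_body K \<longleftrightarrow> compact K \<and> convex K \<and> interior K \<noteq> {}"

lemma convex_body_affine_image:
  fixes A :: "real^'n^'n"
  assumes "convex_body K" "invertible A"
  shows "convex_body ((\<lambda>x. A *v x + b) ` K)"
proof -
  have "inj ((*v) A)"
    using assms(2) matrix_left_invertible_injective by (auto simp: invertible_def)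
  then have "interior ((*v) A ` K) = (*v) A ` interior K"
    by (rule interior_injective_linear_image[OF matrix_vector_mul_linear])
  then show ?thesis
    using assms(1) compact_affine_image[where S = K and A = A and b = b]
    by (auto simp: convex_body_def affine_image_eq interior_translation
        intro!: convex_translation convex_linear_image)
qed

lemma convex_body_cball: "0 < r \<Longrightarrow> convex_body (cball c r)"
  by (simp add: convex_body_def)

lemma disjoint_unit_cballs_outside:
  fixes K :: "'a::euclidean_space set"
  assumes "bounded K"
  obtains p q where "K \<inter> cball p 1 = {}" "K \<inter> cball q 1 = {}" "cball p 1 \<inter> cball q 1 = {}"
proof -
  obtain R0 where "\<forall>x\<in>K. norm x \<le> R0"
    using assms by (auto simp: bounded_iff)
  then obtain R where R: "0 \<le> R" "K \<subseteq> cball 0 R"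
    by (intro that[of "max R0 0"]) (auto simp: subset_iff)
  define e :: 'a where "e = (SOME i. i \<in> Basis)"
  have e: "norm e = 1"
    by (simp add: e_def SOME_Basis)
  have "dist 0 ((R + 2) *\<^sub>R e) > R + 1" "dist 0 ((R + 5) *\<^sub>R e) > R + 1"
    "dist ((R + 2) *\<^sub>R e) ((R + 5) *\<^sub>R e) > 1 + 1"
    using R(1) e by (simp_all add: dist_norm scaleR_diff_left[symmetric])
  with R(2) show ?thesis
    by (intro that[of "(R + 2) *\<^sub>R e" "(R + 5) *\<^sub>R e"]) (blast dest: disjoint_cballI)+
qed

definition ind_inf_shift :: "'a set \<Rightarrow> real \<Rightarrow> 'a \<Rightarrow> ereal" where
  "ind_inf_shift K t = (\<lambda>x. ind_inf K x + ereal t)"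

lemma ind_inf_shift_apply: "ind_inf_shift K t x = (if x \<in> K then ereal t else \<infinity>)"
  by (simp add: ind_inf_shift_def ind_inf_def)

lemma edom_ind_inf_shift: "edom (ind_inf_shift K t) = K"
  by (simp add: edom_def ind_inf_shift_apply)

lemma elsc_ind_inf_shift:
  assumes "closed K"
  shows "elsc (ind_inf_shift K t)"
  unfolding elsc_def
proof
  fix c :: ereal
  have "{x. ind_inf_shift K t x \<le> c} = (if c = \<infinity> then UNIV else if ereal t \<le> c then K else {})"
    by (auto simp: ind_inf_shift_apply)
  then show "closed {x. ind_inf_shift K t x \<le> c}"
    using assms by simp
qed

lemma econvex_ind_inf_shift:
  assumes "convex K"
  shows "econvex (ind_inf_shift K t)"
  unfolding econvex_def
proof (intro allI impI)
  fix x y and s :: real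
  assume s: "0 \<le> s \<and> s \<le> 1"
  let ?u = "ind_inf_shift K t"
  show "?u ((1 - s) *\<^sub>R x + s *\<^sub>R y) \<le> ereal (1 - s) * ?u x + ereal s * ?u y"
  proof (cases "s = 0 \<or> s = 1")
    case True
    then show ?thesis
      by (auto simp: zero_ereal_def[symmetric])
  next
    case False
    then have "0 < s" "s < 1"
      using s by auto
    show ?thesis
    proof (cases "x \<in> K \<and> y \<in> K")
      case True
      then have "(1 - s) *\<^sub>R x + s *\<^sub>R y \<in> K"
        using convexD[OF assms, of x y "1 - s" s] s by simp
      with True show ?thesis
        by (simp add: ind_inf_shift_apply left_diff_distrib)
    next
      case False
      then have rhs: "ereal (1 - s) * ?u x + ereal s * ?u y = \<infinity>"
        using \<open>0 < s\<close> \<open>s < 1\<close> by (auto simp: ind_inf_shift_apply)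
      show ?thesis
        unfolding rhs by simp
    qed
  qed
qed

lemma ind_inf_shift_Conv_coe:
  fixes K :: "(real^'n) set"
  assumes "convex_body K"
  shows "ind_inf_shift K t \<in> Conv_coe"
proof -
  have K: "compact K" "convex K" "interior K \<noteq> {}"
    using assms by (auto simp: convex_body_def)
  obtain R where R: "\<And>x. x \<in> K \<Longrightarrow> norm x \<le> R"
    using compact_imp_bounded[OF K(1)] bounded_iff by blast
  have "\<forall>\<^sub>F x in at_infinity. ind_inf_shift K t x = \<infinity>"
    unfolding eventually_at_infinity
    by (rule exI[of _ "R + 1"]) (auto simp: ind_inf_shift_apply dest: R)
  then have "(ind_inf_shift K t \<longlongrightarrow> \<infinity>) at_infinity"
    by (simp add: tendsto_eventually)
  moreover have "aff_dim K = int CARD('n)"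
    using aff_dim_nonempty_interior[OF K(3)] by simp
  moreover have "ind_inf_shift K t x \<noteq> - \<infinity>" for x
    by (simp add: ind_inf_shift_apply)
  ultimately show ?thesis
    using K interior_subset[of K]
    by (auto simp: Conv_coe_def edom_ind_inf_shift elsc_ind_inf_shift econvex_ind_inf_shift
        compact_imp_closed)
qed

section \<open>Convex lower semicontinuous functions\<close>

lemma borel_measurable_elsc:
  fixes u :: "'a::topological_space \<Rightarrow> ereal"
  assumes "elsc u"
  shows "u \<in> borel_measurable borel"
  unfolding borel_measurable_iff_Iic_ereal
proof
  fix a
  have "u -` {..a} \<inter> space borel = {x. u x \<le> a}"
    by auto
  then show "u -` {..a} \<inter> space borel \<in> sets borel"
    using assms by (simp add: elsc_def)
qed

lemma econvexD:
  "econvex u \<Longrightarrow> 0 \<le> t \<Longrightarrow> t \<le> 1 \<Longrightarrow>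
    u ((1 - t) *\<^sub>R x + t *\<^sub>R y) \<le> ereal (1 - t) * u x + ereal t * u y"
  by (simp add: econvex_def)

lemma econvex_less_near:
  fixes u :: "'a::real_normed_vector \<Rightarrow> ereal"
  assumes "econvex u" "\<And>y. u y \<noteq> -\<infinity>" "\<And>y. y \<in> ball x r \<Longrightarrow> u y \<le> ereal f"
    and "u x < ereal f" "y \<in> ball x (r / 2)"
  shows "u y < ereal f"
proof -
  define w where "w = 2 *\<^sub>R y - x"
  have "x - w = 2 *\<^sub>R (x - y)"
    by (simp add: w_def algebra_simps scaleR_2)
  then have "w \<in> ball x r"
    using assms(5) by (simp add: dist_norm)
  then obtain s where s: "u w = ereal s" "s \<le> f"
    using assms(2,3) by (cases "u w") force+
  obtain b where b: "u x = ereal b" "b < f"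
    using assms(2,4) by (cases "u x") auto
  have "y = (1 - 1/2) *\<^sub>R x + (1/2) *\<^sub>R w"
    by (simp add: w_def algebra_simps)
  then have "u y \<le> ereal (1 - 1/2) * u x + ereal (1/2) * u w"
    by (simp only:) (rule econvexD[OF assms(1)]; simp)
  also have "\<dots> < ereal f"
    using s b by simp
  finally show ?thesis .
qed

lemma econvex_eq_if_AE_ge:
  fixes u :: "'a::euclidean_space \<Rightarrow> ereal"
  assumes "econvex u" "\<And>y. u y \<noteq> -\<infinity>" "open S" "\<And>y. y \<in> S \<Longrightarrow> u y \<le> ereal f"
    and "AE y in lborel. y \<in> S \<longrightarrow> ereal f \<le> u y" "x \<in> S"
  shows "u x = ereal f"
proof (rule ccontr)
  assume "u x \<noteq> ereal f"
  with assms(4,6) have "u x < ereal f"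
    by (simp add: order_less_le)
  obtain r where r: "0 < r" "ball x r \<subseteq> S"
    using assms(3,6) open_contains_ball by blast
  have "ball x (r / 2) \<subseteq> S"
    using r by auto
  with assms(5) have "AE y in lborel. y \<in> ball x (r / 2) \<longrightarrow> ereal f \<le> u y"
    by (elim AE_mp) (auto intro!: AE_I2)
  then obtain y where "y \<in> ball x (r / 2)" "ereal f \<le> u y"
    using AE_lborel_open_ex[of "ball x (r / 2)"] r(1) by fastforce
  moreover have "u y < ereal f" if "y \<in> ball x (r / 2)" for y
    using econvex_less_near[OF assms(1,2) _ \<open>u x < ereal f\<close> that] assms(4) r(2) by blast
  ultimately show False
    by (simp add: not_le[symmetric])
qed

lemma econvex_elsc_eq_on_closed:
  fixes u :: "'a::euclidean_space \<Rightarrow> ereal"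
  assumes "econvex u" "elsc u" "\<And>y. u y \<noteq> -\<infinity>"
    and "convex D" "closed D" "interior D \<noteq> {}" "\<And>y. y \<in> interior D \<Longrightarrow> u y = ereal f"
    and "x \<in> D"
  shows "u x = ereal f"
proof -
  have "closure (interior D) \<subseteq> {y. u y \<le> ereal f}"
    using assms(2,7) by (intro closure_minimal) (auto simp: elsc_def)
  then have le: "u x \<le> ereal f"
    using assms(4-6,8) convex_closure_interior[of D] by (auto simp: closure_closed)
  then obtain b where b: "u x = ereal b"
    using assms(3) by (cases "u x") auto
  obtain y where y: "y \<in> interior D"
    using assms(6) by blast
  have "x - (1/2) *\<^sub>R (x - y) \<in> interior D"
    using mem_interior_closure_convex_shrink[OF assms(4) y, of x "1/2"] assms(5,8)
    by (simp add: closure_closed)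
  moreover have "x - (1/2) *\<^sub>R (x - y) = (1 - 1/2) *\<^sub>R x + (1/2) *\<^sub>R y"
    by (simp add: algebra_simps) (simp add: scaleR_add_left[symmetric])
  ultimately have "ereal f \<le> ereal (1 - 1/2) * u x + ereal (1/2) * u y"
    using econvexD[OF assms(1), of "1/2" x y] assms(7) by simp
  then have "f \<le> b"
    using b assms(7)[OF y] by simp
  then show ?thesis
    using le b by simp
qed

section \<open>Integrals of \<zeta> along a function\<close>

definition zeta_integral :: "(real \<Rightarrow> real) \<Rightarrow> ('a::euclidean_space \<Rightarrow> ereal) \<Rightarrow> ennreal" where
  "zeta_integral \<zeta> u = (\<integral>\<^sup>+x. ennreal (zeta_ext \<zeta> (u x)) \<partial>lborel)"

definition mean_ge_near :: "('a::euclidean_space \<Rightarrow> ennreal) \<Rightarrow> real \<Rightarrow> 'a \<Rightarrow> bool" where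
  "mean_ge_near g c x \<longleftrightarrow> (\<forall>V. open V \<and> x \<in> V \<longrightarrow> (\<exists>E \<subseteq> V. E \<in> sets lborel \<and>
      0 < emeasure lborel E \<and> emeasure lborel E < \<infinity> \<and>
      ennreal c * emeasure lborel E \<le> (\<integral>\<^sup>+y. g y * indicator E y \<partial>lborel)))"

locale decreasing_profile =
  fixes \<zeta> :: "real \<Rightarrow> real"
  assumes continuous: "continuous_on UNIV \<zeta>"
    and decreasing: "s < t \<Longrightarrow> \<zeta> t < \<zeta> s"
    and positive: "0 < \<zeta> t"
begin

lemma less_iff: "\<zeta> t < \<zeta> s \<longleftrightarrow> s < t"
  by (metis decreasing linorder_neqE_linordered_idom order_less_asym)

lemma le_iff: "\<zeta> t \<le> \<zeta> s \<longleftrightarrow> s \<le> t"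
  by (meson less_iff not_less)

lemma zeta_ext_nonneg: "0 \<le> zeta_ext \<zeta> v"
  by (cases v) (auto simp: zeta_ext_def less_imp_le positive)

lemma zeta_ext_le_if_greater: "ereal a < v \<Longrightarrow> zeta_ext \<zeta> v \<le> \<zeta> a"
  by (cases v) (auto simp: zeta_ext_def less_imp_le decreasing positive)

lemma borel_measurable_zeta_ext: "zeta_ext \<zeta> \<in> borel_measurable borel"
proof -
  have "zeta_ext \<zeta> = (\<lambda>v. if v \<in> {\<infinity>, -\<infinity>} then 0 else \<zeta> (real_of_ereal v))"
    by (auto simp: fun_eq_iff zeta_ext_def split: ereal.split)
  also have "\<dots> \<in> borel_measurable borel"
  proof (rule measurable_If_set)
    show "(\<lambda>v. \<zeta> (real_of_ereal v)) \<in> borel_measurable borel"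
      using borel_measurable_real_of_ereal[OF measurable_ident_sets[OF refl]]
        borel_measurable_continuous_onI[OF continuous]
      by (rule measurable_compose)
  qed (simp_all add: measurable_ident_sets)
  finally show ?thesis .
qed

lemma borel_measurable_zeta_ext_comp:
  "elsc u \<Longrightarrow> (\<lambda>x. zeta_ext \<zeta> (u x)) \<in> borel_measurable lborel"
  using measurable_compose[OF borel_measurable_elsc borel_measurable_zeta_ext]
  by (simp add: measurable_lborel2)

lemma zeta_integral_ind_inf_shift:
  assumes "K \<in> sets borel"
  shows "zeta_integral \<zeta> (ind_inf_shift K t) = ennreal (\<zeta> t) * emeasure lborel K"
proof -
  have "(\<lambda>x. ennreal (zeta_ext \<zeta> (ind_inf_shift K t x))) = (\<lambda>x. ennreal (\<zeta> t) * indicator K x)"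
    by (auto simp: ind_inf_shift_apply zeta_ext_def)
  then show ?thesis
    using assms by (simp add: zeta_integral_def nn_integral_cmult_indicator)
qed

lemma delta_zeta1_ind_inf_shift_subset:
  assumes "L \<subseteq> K" "K \<in> sets borel" "L \<in> sets borel"
  shows "delta_zeta1 \<zeta> (ind_inf_shift K t) (ind_inf_shift L t) = ennreal (\<zeta> t) * emeasure lborel (K - L)"
proof -
  have "delta_zeta1 \<zeta> (ind_inf_shift K t) (ind_inf_shift L t)
      = (\<integral>\<^sup>+x. ennreal (\<zeta> t) * indicator (K - L) x \<partial>lborel)"
    unfolding delta_zeta1_def using assms(1) positive[of t]
    by (intro nn_integral_cong) (auto simp: ind_inf_shift_apply zeta_ext_def indicator_def)
  also have "\<dots> = ennreal (\<zeta> t) * emeasure lborel (K - L)"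
    using assms(2,3) by (intro nn_integral_cmult_indicator) auto
  finally show ?thesis .
qed

lemma zeta_integral_add_le_delta_zeta1:
  assumes "elsc u" "elsc v" "E \<in> sets borel" "edom v \<subseteq> E"
  shows "zeta_integral \<zeta> u + zeta_integral \<zeta> v
    \<le> delta_zeta1 \<zeta> u v + 2 * (\<integral>\<^sup>+x. ennreal (zeta_ext \<zeta> (u x)) * indicator E x \<partial>lborel)"
proof -
  define g where "g = (\<lambda>x. zeta_ext \<zeta> (u x))"
  define h where "h = (\<lambda>x. zeta_ext \<zeta> (v x))"
  have meas: "g \<in> borel_measurable lborel" "h \<in> borel_measurable lborel"
    unfolding g_def h_def by (rule borel_measurable_zeta_ext_comp[OF assms(1)]
        borel_measurable_zeta_ext_comp[OF assms(2)])+
  have "h x = 0" if "x \<notin> E" for x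
  proof -
    have "v x = \<infinity>"
      using that assms(4) by (auto simp: edom_def)
    then show ?thesis
      by (simp add: h_def zeta_ext_def)
  qed
  then have pointwise: "ennreal (g x) + ennreal (h x)
      \<le> ennreal \<bar>g x - h x\<bar> + 2 * (ennreal (g x) * indicator E x)" for x
    using ennreal_add_le_abs_diff[of "g x" "h x"]
    by (cases "x \<in> E") (simp_all add: g_def h_def zeta_ext_nonneg)
  have "(\<lambda>x. ennreal \<bar>g x - h x\<bar>) \<in> borel_measurable lborel"
    "(\<lambda>x. 2 * (ennreal (g x) * indicator E x)) \<in> borel_measurable lborel"
    using meas assms(3) by measurable
  moreover have "zeta_integral \<zeta> u + zeta_integral \<zeta> v = (\<integral>\<^sup>+x. ennreal (g x) + ennreal (h x) \<partial>lborel)"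
    using meas by (simp add: zeta_integral_def g_def h_def nn_integral_add)
  moreover have "\<dots> \<le> (\<integral>\<^sup>+x. ennreal \<bar>g x - h x\<bar> + 2 * (ennreal (g x) * indicator E x) \<partial>lborel)"
    by (intro nn_integral_mono pointwise)
  ultimately show ?thesis
    using meas(1) assms(3) by (simp add: delta_zeta1_def g_def h_def nn_integral_add nn_integral_cmult)
qed

lemma delta_zeta1_disjoint_edom:
  assumes "elsc u" "elsc v" "edom u \<inter> edom v = {}"
  shows "delta_zeta1 \<zeta> u v = zeta_integral \<zeta> u + zeta_integral \<zeta> v"
proof -
  have "ennreal \<bar>zeta_ext \<zeta> (u x) - zeta_ext \<zeta> (v x)\<bar>
      = ennreal (zeta_ext \<zeta> (u x)) + ennreal (zeta_ext \<zeta> (v x))" for x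
  proof -
    have "u x = \<infinity> \<or> v x = \<infinity>"
      using assms(3) by (auto simp: edom_def)
    then show ?thesis
      using zeta_ext_nonneg[of "u x"] zeta_ext_nonneg[of "v x"] by (auto simp: zeta_ext_def)
  qed
  then show ?thesis
    unfolding delta_zeta1_def zeta_integral_def
    using borel_measurable_zeta_ext_comp[OF assms(1)] borel_measurable_zeta_ext_comp[OF assms(2)]
    by (simp add: nn_integral_add)
qed

lemma zeta_ge_if_mean_ge_near:
  assumes "elsc u" "u x = ereal b" "mean_ge_near (\<lambda>y. ennreal (zeta_ext \<zeta> (u y))) c x"
  shows "c \<le> \<zeta> b"
proof (rule ccontr)
  assume "\<not> c \<le> \<zeta> b"
  have "open {s. \<zeta> s < c}"
    using continuous by (intro open_Collect_less) (auto intro: continuous_on_const)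
  moreover have "b \<in> {s. \<zeta> s < c}"
    using \<open>\<not> c \<le> \<zeta> b\<close> by simp
  ultimately obtain d where d: "0 < d" "ball b d \<subseteq> {s. \<zeta> s < c}"
    by (rule openE)
  define a where "a = b - d / 2"
  have "a \<in> ball b d" "a < b"
    using d(1) by (simp_all add: a_def dist_real_def)
  then have a: "a < b" "\<zeta> a < c"
    using d(2) by auto
  have "{y. ereal a < u y} = - {y. u y \<le> ereal a}"
    by auto
  then have "open {y. ereal a < u y}"
    using assms(1) by (simp add: elsc_def open_Compl)
  moreover have "x \<in> {y. ereal a < u y}"
    using assms(2) a(1) by simp
  ultimately obtain E where E: "E \<subseteq> {y. ereal a < u y}" "E \<in> sets lborel"
      "0 < emeasure lborel E" "emeasure lborel E < \<infinity>"
      "ennreal c * emeasure lborel E \<le> (\<integral>\<^sup>+y. ennreal (zeta_ext \<zeta> (u y)) * indicator E y \<partial>lborel)"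
    using assms(3) unfolding mean_ge_near_def by blast
  note E(5)
  also have "\<dots> \<le> (\<integral>\<^sup>+y. ennreal (\<zeta> a) * indicator E y \<partial>lborel)"
    using E(1) zeta_ext_le_if_greater
    by (intro nn_integral_mono) (auto simp: ennreal_leI split: split_indicator)
  also have "\<dots> = ennreal (\<zeta> a) * emeasure lborel E"
    using E(2) by (rule nn_integral_cmult_indicator)
  finally have "ennreal c \<le> ennreal (\<zeta> a)"
    using E(3,4) by (simp add: ennreal_mult_le_mult_iff mult.commute[of _ "emeasure lborel E"])
  then show False
    using a(2) positive[of a] by (simp add: ennreal_le_iff)
qed

lemma zeta_ext_ge_iff: "v \<noteq> \<infinity> \<Longrightarrow> v \<noteq> -\<infinity> \<Longrightarrow> \<zeta> f \<le> zeta_ext \<zeta> v \<longleftrightarrow> v \<le> ereal f"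
  by (cases v) (auto simp: zeta_ext_def le_iff)

lemma zeta_ext_le_iff: "v \<noteq> \<infinity> \<Longrightarrow> v \<noteq> -\<infinity> \<Longrightarrow> zeta_ext \<zeta> v \<le> \<zeta> f \<longleftrightarrow> ereal f \<le> v"
  by (cases v) (auto simp: zeta_ext_def le_iff)

lemma zeta_comp_eq_AE_on_interior:
  fixes u :: "'a::euclidean_space \<Rightarrow> ereal"
  assumes u: "elsc u" "\<And>x. u x \<noteq> -\<infinity>" "edom u = D"
    and D: "convex_body D" and "0 < c"
    and upper: "zeta_integral \<zeta> u \<le> ennreal c * emeasure lborel D"
    and lower: "\<And>x. x \<in> interior D \<Longrightarrow> mean_ge_near (\<lambda>y. ennreal (zeta_ext \<zeta> (u y))) c x"
  shows "\<forall>x\<in>interior D. c \<le> zeta_ext \<zeta> (u x)"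
    and "AE x in lborel. x \<in> interior D \<longrightarrow> zeta_ext \<zeta> (u x) \<le> c"
proof -
  have ge: "c \<le> zeta_ext \<zeta> (u x)" if "x \<in> interior D" for x
  proof -
    have "u x \<noteq> \<infinity>"
      using that interior_subset u(3) by (auto simp: edom_def)
    then obtain b where "u x = ereal b"
      using u(2)[of x] by (cases "u x") auto
    then show ?thesis
      using zeta_ge_if_mean_ge_near[OF u(1) _ lower[OF that]] by (simp add: zeta_ext_def)
  qed
  then show "\<forall>x\<in>interior D. c \<le> zeta_ext \<zeta> (u x)"
    by blast
  have D': "compact D" "convex D" "closed D"
    using D by (auto simp: convex_body_def compact_imp_closed)
  have "(\<integral>\<^sup>+x. ennreal (zeta_ext \<zeta> (u x)) * indicator (interior D) x \<partial>lborel) \<le> zeta_integral \<zeta> u"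
    unfolding zeta_integral_def by (intro nn_integral_mono) (auto split: split_indicator)
  also note upper
  finally show "AE x in lborel. x \<in> interior D \<longrightarrow> zeta_ext \<zeta> (u x) \<le> c"
    using ge \<open>0 < c\<close> emeasure_compact_finite[OF D'(1)] borel_measurable_zeta_ext_comp[OF u(1)]
    by (intro AE_le_if_ge_and_nn_integral_le)
      (auto simp: emeasure_lborel_interior_convex[OF D'(2,3)])
qed

lemma eq_ind_inf_shift_if_zeta_bounds:
  fixes u :: "'a::euclidean_space \<Rightarrow> ereal"
  assumes u: "elsc u" "econvex u" "\<And>x. u x \<noteq> -\<infinity>" "edom u = D"
    and D: "convex_body D" and "0 < c"
    and upper: "zeta_integral \<zeta> u \<le> ennreal c * emeasure lborel D"
    and lower: "\<And>x. x \<in> interior D \<Longrightarrow> mean_ge_near (\<lambda>y. ennreal (zeta_ext \<zeta> (u y))) c x"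
  shows "c \<in> range \<zeta> \<and> u = ind_inf_shift D (inv \<zeta> c)"
proof -
  have ge: "\<forall>x\<in>interior D. c \<le> zeta_ext \<zeta> (u x)"
    and AE_le: "AE x in lborel. x \<in> interior D \<longrightarrow> zeta_ext \<zeta> (u x) \<le> c"
    using zeta_comp_eq_AE_on_interior[OF u(1,3,4) D \<open>0 < c\<close> upper lower] by blast+
  have D': "convex D" "closed D" "interior D \<noteq> {}"
    using D by (auto simp: convex_body_def compact_imp_closed)
  have finite_int: "u x \<noteq> \<infinity>" "u x \<noteq> -\<infinity>" if "x \<in> interior D" for x
    using that interior_subset u(3,4) by (auto simp: edom_def)
  obtain x1 where x1: "x1 \<in> interior D" "zeta_ext \<zeta> (u x1) \<le> c"
    using AE_lborel_open_ex[OF AE_le open_interior D'(3)] by blast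
  then have "c = \<zeta> (real_of_ereal (u x1))"
    using bspec[OF ge x1(1)] x1(2) finite_int[OF x1(1)] by (cases "u x1") (simp_all add: zeta_ext_def)
  then have c: "c \<in> range \<zeta>"
    by (rule range_eqI)
  define f where "f = inv \<zeta> c"
  have f: "\<zeta> f = c"
    unfolding f_def using c by (rule f_inv_into_f)
  have le: "u x \<le> ereal f" if "x \<in> interior D" for x
    using bspec[OF ge that] zeta_ext_ge_iff[OF finite_int[OF that], of f] by (simp add: f)
  have AE_ge: "AE x in lborel. x \<in> interior D \<longrightarrow> ereal f \<le> u x"
    using AE_le by (rule AE_mp) (auto intro!: AE_I2 simp: zeta_ext_le_iff[OF finite_int] f[symmetric])
  have int_eq: "u x = ereal f" if "x \<in> interior D" for x
    by (rule econvex_eq_if_AE_ge[OF u(2,3) open_interior le AE_ge that])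
  have "u x = ind_inf_shift D f x" for x
  proof (cases "x \<in> D")
    case True
    then show ?thesis
      using econvex_elsc_eq_on_closed[OF u(2,1,3) D' int_eq] by (simp add: ind_inf_shift_apply)
  next
    case False
    then show ?thesis
      using u(4) by (auto simp: ind_inf_shift_apply edom_def)
  qed
  with c show ?thesis
    unfolding f_def by auto
qed

end

locale delta_isometry =
  fixes \<zeta> :: "real \<Rightarrow> real"
    and I :: "(real^'n \<Rightarrow> ereal) \<Rightarrow> (real^'n \<Rightarrow> ereal)"
    and A :: "real^'n^'n" and x0 :: "real^'n"
  assumes zeta: "\<zeta> \<in> M1 (CARD('n) - 1)"
    and I_maps: "\<forall>u \<in> Conv_coe. I u \<in> Conv_coe"
    and I_iso: "\<forall>u \<in> Conv_coe. \<forall>v \<in> Conv_coe. delta_zeta1 \<zeta> (I u) (I v) = delta_zeta1 \<zeta> u v"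
    and A_inv: "invertible A"
    and dom: "\<forall>K t. compact K \<and> convex K \<and> interior K \<noteq> {} \<longrightarrow>
               edom (I (\<lambda>x. ind_inf K x + ereal t)) = (\<lambda>x. A *v x + x0) ` K"

sublocale delta_isometry \<subseteq> decreasing_profile \<zeta>
  by unfold_locales (use zeta in \<open>auto simp: M1_def\<close>)

context delta_isometry
begin

abbreviation aff :: "real^'n \<Rightarrow> real^'n" where
  "aff \<equiv> \<lambda>x. A *v x + x0"

lemma inj_aff: "inj aff"
  using A_inv matrix_left_invertible_injective[of A] by (auto simp: invertible_def inj_def)

lemma I_ind_Conv_coe: "convex_body K \<Longrightarrow> I (ind_inf_shift K t) \<in> Conv_coe"
  using I_maps ind_inf_shift_Conv_coe by blast

lemma edom_I_ind: "convex_body K \<Longrightarrow> edom (I (ind_inf_shift K t)) = aff ` K"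
  using dom by (simp add: convex_body_def ind_inf_shift_def)

lemma elsc_I_ind: "convex_body K \<Longrightarrow> elsc (I (ind_inf_shift K t))"
  using I_ind_Conv_coe by (simp add: Conv_coe_def)

lemma delta_zeta1_I_ind:
  assumes "convex_body K" "convex_body L"
  shows "delta_zeta1 \<zeta> (I (ind_inf_shift K t)) (I (ind_inf_shift L s))
       = delta_zeta1 \<zeta> (ind_inf_shift K t) (ind_inf_shift L s)"
  using I_iso ind_inf_shift_Conv_coe[OF assms(1)] ind_inf_shift_Conv_coe[OF assms(2)] by blast

lemma zeta_integral_ind_body:
  "convex_body K \<Longrightarrow> zeta_integral \<zeta> (ind_inf_shift K t) = ennreal (\<zeta> t) * emeasure lborel K"
  by (simp add: zeta_integral_ind_inf_shift convex_body_def borel_compact)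

lemma zeta_integral_I_ind_disjoint:
  assumes "convex_body K" "convex_body L" "K \<inter> L = {}"
  shows "zeta_integral \<zeta> (I (ind_inf_shift K t)) + zeta_integral \<zeta> (I (ind_inf_shift L s))
       = zeta_integral \<zeta> (ind_inf_shift K t) + zeta_integral \<zeta> (ind_inf_shift L s)"
proof -
  have "edom (I (ind_inf_shift K t)) \<inter> edom (I (ind_inf_shift L s)) = {}"
    using assms by (simp add: edom_I_ind image_Int[OF inj_aff, symmetric])
  then have "delta_zeta1 \<zeta> (I (ind_inf_shift K t)) (I (ind_inf_shift L s))
      = zeta_integral \<zeta> (I (ind_inf_shift K t)) + zeta_integral \<zeta> (I (ind_inf_shift L s))"
    using assms by (intro delta_zeta1_disjoint_edom elsc_I_ind)
  moreover have "delta_zeta1 \<zeta> (ind_inf_shift K t) (ind_inf_shift L s)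
      = zeta_integral \<zeta> (ind_inf_shift K t) + zeta_integral \<zeta> (ind_inf_shift L s)"
    using assms by (intro delta_zeta1_disjoint_edom elsc_ind_inf_shift)
      (auto simp: convex_body_def compact_imp_closed edom_ind_inf_shift)
  ultimately show ?thesis
    using delta_zeta1_I_ind[OF assms(1,2)] by simp
qed

lemma zeta_integral_I_ind:
  assumes "convex_body K"
  shows "zeta_integral \<zeta> (I (ind_inf_shift K t)) = ennreal (\<zeta> t) * emeasure lborel K"
proof -
  have "bounded K"
    using assms by (simp add: convex_body_def compact_imp_bounded)
  then obtain p q where pq: "K \<inter> cball p 1 = {}" "K \<inter> cball q 1 = {}" "cball p 1 \<inter> cball q 1 = {}"
    by (rule disjoint_unit_cballs_outside)
  have balls: "convex_body (cball p 1)" "convex_body (cball q 1)"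
    by (simp_all add: convex_body_cball)
  have finite_integral: "zeta_integral \<zeta> (ind_inf_shift B s) < top" if "convex_body B" for B s
    using that emeasure_compact_finite[of B]
    by (simp add: zeta_integral_ind_body convex_body_def ennreal_mult_less_top)
  have "zeta_integral \<zeta> (I (ind_inf_shift K t)) = zeta_integral \<zeta> (ind_inf_shift K t)"
    by (rule ennreal_eq_if_pairwise_sums_eq[OF
          zeta_integral_I_ind_disjoint[OF assms balls(1) pq(1), of t 0]
          zeta_integral_I_ind_disjoint[OF assms balls(2) pq(2), of t 0]
          zeta_integral_I_ind_disjoint[OF balls pq(3), of 0 0]
          finite_integral[OF assms] finite_integral[OF balls(1)] finite_integral[OF balls(2)]])
  then show ?thesis
    using zeta_integral_ind_body[OF assms] by simp
qed

lemma zeta_integral_I_ind_on_image_ge: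
  assumes K: "convex_body K" and L: "convex_body L" and "L \<subseteq> K"
  shows "ennreal (\<zeta> t) * emeasure lborel L
    \<le> (\<integral>\<^sup>+x. ennreal (zeta_ext \<zeta> (I (ind_inf_shift K t) x)) * indicator (aff ` L) x \<partial>lborel)"
    (is "_ \<le> ?X")
proof -
  have borel: "K \<in> sets borel" "L \<in> sets borel" "aff ` L \<in> sets borel"
    using K L by (auto simp: convex_body_def borel_compact compact_affine_image)
  have "zeta_integral \<zeta> (I (ind_inf_shift K t)) + zeta_integral \<zeta> (I (ind_inf_shift L t))
      \<le> delta_zeta1 \<zeta> (I (ind_inf_shift K t)) (I (ind_inf_shift L t)) + 2 * ?X"
    using K L borel(3) by (intro zeta_integral_add_le_delta_zeta1 elsc_I_ind) (simp_all add: edom_I_ind)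
  also have "delta_zeta1 \<zeta> (I (ind_inf_shift K t)) (I (ind_inf_shift L t))
      = ennreal (\<zeta> t) * emeasure lborel (K - L)"
    using delta_zeta1_I_ind[OF K L] delta_zeta1_ind_inf_shift_subset[OF assms(3) borel(1,2)] by simp
  finally have le: "zeta_integral \<zeta> (I (ind_inf_shift K t)) + zeta_integral \<zeta> (I (ind_inf_shift L t))
      \<le> ennreal (\<zeta> t) * emeasure lborel (K - L) + 2 * ?X" .
  have "emeasure lborel K = emeasure lborel (K - L) + emeasure lborel L"
    using plus_emeasure[of "K - L" lborel L] borel assms(3)
    by (simp add: Diff_Int_distrib2 Int_commute Un_absorb2)
  then have "zeta_integral \<zeta> (I (ind_inf_shift K t)) + zeta_integral \<zeta> (I (ind_inf_shift L t))
      = ennreal (\<zeta> t) * emeasure lborel (K - L) + 2 * (ennreal (\<zeta> t) * emeasure lborel L)"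
    by (simp add: zeta_integral_I_ind[OF K] zeta_integral_I_ind[OF L] distrib_left mult_2 add.assoc)
  moreover have "ennreal (\<zeta> t) * emeasure lborel (K - L) \<noteq> \<infinity>"
    using emeasure_mono[of "K - L" K lborel] emeasure_compact_finite[of K] K borel(1)
    by (auto simp: convex_body_def ennreal_mult_eq_top_iff top_unique)
  ultimately have "2 * (ennreal (\<zeta> t) * emeasure lborel L) \<le> 2 * ?X"
    using le by (simp add: ennreal_add_left_cancel_le)
  then show ?thesis
    by (simp add: ennreal_mult_le_mult_iff)
qed

lemma det_pos: "0 < \<bar>det A\<bar>"
  using A_inv by (simp add: invertible_det_nz)

lemma mean_ge_near_I_ind:
  assumes K: "convex_body K" and x: "x \<in> interior (aff ` K)"
  shows "mean_ge_near (\<lambda>y. ennreal (zeta_ext \<zeta> (I (ind_inf_shift K t) y))) (\<zeta> t / \<bar>det A\<bar>) x"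
  unfolding mean_ge_near_def
proof (intro allI impI)
  fix V assume V: "open V \<and> x \<in> V"
  have "open (aff -` (V \<inter> interior (aff ` K)))"
    using V by (intro open_vimage continuous_intros matrix_vector_mult_linear_continuous_on) auto
  moreover obtain z where z: "x = aff z"
    using x interior_subset by blast
  ultimately obtain r where r: "0 < r" "cball z r \<subseteq> aff -` (V \<inter> interior (aff ` K))"
    using V x open_contains_cball by blast
  have L: "convex_body (cball z r)"
    using r(1) by (rule convex_body_cball)
  have "cball z r \<subseteq> K"
    using r(2) interior_subset[of "aff ` K"] inj_aff by (auto dest: injD)
  then have "ennreal (\<zeta> t) * emeasure lborel (cball z r)
      \<le> (\<integral>\<^sup>+y. ennreal (zeta_ext \<zeta> (I (ind_inf_shift K t) y)) * indicator (aff ` cball z r) y \<partial>lborel)"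
    by (rule zeta_integral_I_ind_on_image_ge[OF K L])
  moreover have "emeasure lborel (aff ` cball z r) = ennreal \<bar>det A\<bar> * emeasure lborel (cball z r)"
    by (simp add: emeasure_lborel_affine_image)
  moreover have "0 < emeasure lborel (cball z r)"
    using r(1) by (simp add: emeasure_cball)
  ultimately show "\<exists>E \<subseteq> V. E \<in> sets lborel \<and> 0 < emeasure lborel E \<and> emeasure lborel E < \<infinity> \<and>
      ennreal (\<zeta> t / \<bar>det A\<bar>) * emeasure lborel E
        \<le> (\<integral>\<^sup>+y. ennreal (zeta_ext \<zeta> (I (ind_inf_shift K t) y)) * indicator E y \<partial>lborel)"
    using r(2) det_pos positive[of t] emeasure_compact_finite[OF compact_cball[of z r]]
    by (intro exI[of _ "aff ` cball z r"])
      (auto simp: borel_compact compact_affine_image emeasure_compact_finite ennreal_mult_less_top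
        ennreal_mult[symmetric] mult.assoc[symmetric] ennreal_zero_less_mult_iff)
qed

lemma I_ind_inf_shift:
  assumes K: "convex_body K"
  shows "\<zeta> t / \<bar>det A\<bar> \<in> range \<zeta> \<and>
    I (ind_inf_shift K t) = ind_inf_shift (aff ` K) (inv \<zeta> (\<zeta> t / \<bar>det A\<bar>))"
proof (rule eq_ind_inf_shift_if_zeta_bounds)
  show "elsc (I (ind_inf_shift K t))" "econvex (I (ind_inf_shift K t))"
    "\<And>x. I (ind_inf_shift K t) x \<noteq> - \<infinity>"
    using I_ind_Conv_coe[OF K] by (auto simp: Conv_coe_def)
  show "edom (I (ind_inf_shift K t)) = aff ` K"
    by (rule edom_I_ind[OF K])
  show "convex_body (aff ` K)"
    by (rule convex_body_affine_image[OF K A_inv])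
  show "0 < \<zeta> t / \<bar>det A\<bar>"
    using positive det_pos by simp
  have "ennreal (\<zeta> t) = ennreal (\<zeta> t / \<bar>det A\<bar>) * ennreal \<bar>det A\<bar>"
    using det_pos positive[of t] by (simp flip: ennreal_mult)
  then have "zeta_integral \<zeta> (I (ind_inf_shift K t))
      = ennreal (\<zeta> t / \<bar>det A\<bar>) * (ennreal \<bar>det A\<bar> * emeasure lborel K)"
    by (simp add: zeta_integral_I_ind[OF K] mult.assoc)
  also have "\<dots> = ennreal (\<zeta> t / \<bar>det A\<bar>) * emeasure lborel (aff ` K)"
    using K by (simp add: emeasure_lborel_affine_image convex_body_def)
  finally show "zeta_integral \<zeta> (I (ind_inf_shift K t)) \<le> ennreal (\<zeta> t / \<bar>det A\<bar>) * emeasure lborel (aff ` K)"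
    by simp
  show "mean_ge_near (\<lambda>y. ennreal (zeta_ext \<zeta> (I (ind_inf_shift K t) y))) (\<zeta> t / \<bar>det A\<bar>) x"
    if "x \<in> interior (aff ` K)" for x
    by (rule mean_ge_near_I_ind[OF K that])
qed

end

theorem lemma4p21:
  fixes \<zeta> :: "real \<Rightarrow> real"
    and I :: "(real^'n \<Rightarrow> ereal) \<Rightarrow> (real^'n \<Rightarrow> ereal)"
    and A :: "real^'n^'n" and x0 :: "real^'n"
  assumes zeta: "\<zeta> \<in> M1 (CARD('n) - 1)"
    and I_maps: "\<forall>u \<in> Conv_coe. I u \<in> Conv_coe"
    and I_iso: "\<forall>u \<in> Conv_coe. \<forall>v \<in> Conv_coe. delta_zeta1 \<zeta> (I u) (I v) = delta_zeta1 \<zeta> u v"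
    and A_inv: "invertible A"
    and dom: "\<forall>K t. compact K \<and> convex K \<and> interior K \<noteq> {} \<longrightarrow>
               edom (I (\<lambda>x. ind_inf K x + ereal t)) = (\<lambda>x. A *v x + x0) ` K"
  shows "(\<forall>t. \<zeta> t / \<bar>det A\<bar> \<in> range \<zeta>) \<and>
         (\<forall>K t. compact K \<and> convex K \<and> interior K \<noteq> {} \<longrightarrow>
            I (\<lambda>x. ind_inf K x + ereal t) =
              (\<lambda>x. ind_inf ((\<lambda>x. A *v x + x0) ` K) x + ereal (inv \<zeta> (\<zeta> t / \<bar>det A\<bar>))))"
proof -
  interpret delta_isometry \<zeta> I A x0
    using assms by unfold_locales
  have "\<zeta> t / \<bar>det A\<bar> \<in> range \<zeta>" for t
    using I_ind_inf_shift[OF convex_body_cball[OF zero_less_one]] by blast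
  moreover have "I (\<lambda>x. ind_inf K x + ereal t) =
      (\<lambda>x. ind_inf (aff ` K) x + ereal (inv \<zeta> (\<zeta> t / \<bar>det A\<bar>)))"
    if "compact K \<and> convex K \<and> interior K \<noteq> {}" for K t
    using I_ind_inf_shift[of K t] that by (simp add: convex_body_def ind_inf_shift_def)
  ultimately show ?thesis
    by blast
qed

end
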